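(* Let $d$ and $p$ be integers with $d>p\ge 2$ and let \[ f_{d,p}(m)=\sum_{j=1}^{p}\binom{j+m-2}{j-1}\binom{d-j+m}{d-j}. \] If $d-2p+2\ge 0$, then the set of complex roots of $f_{d,p}$ is \[ \{-1,-2,\ldots,-(d-p),\alpha_1,\alpha_2,\ldots,\alpha_{p-1}\}, \] where $\alpha_1,\ldots,\alpha_{p-1}$ are real numbers with \[ -(p-1)<\alpha_{p-1}<-(p-2)<\alpha_{p-2}<-(p-3)<\cdots<-1<\alpha_1<0. \]
   Context: For an integer $a\ge 0$, $\binom{a+x}{a}$ denotes the polynomial $\prod_{i=1}^{a}(x+i)/a!$ in $x$; so $\binom{j+m-2}{j-1}=\prod_{i=0}^{j-2}(m+i)/(j-1)!$ and $\binom{d-j+m}{d-j}=\prod_{i=1}^{d-j}(m+i)/(d-j)!$. *)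

theory Defs
  imports Complex_Main
begin

text \<open>binom_poly a x = binom(a+x, a) = prod_{i=1..a} (x+i) / a!, as a function of complex x.\<close>
definition binom_poly :: "nat \<Rightarrow> complex \<Rightarrow> complex" where
  "binom_poly a x = (\<Prod>i\<in>{1..a}. x + of_nat i) / of_nat (fact a)"

text \<open>f_{d,p}(m) = sum_{j=1..p} binom(j+m-2, j-1) * binom(d-j+m, d-j);
  here binom(j+m-2, j-1) = binom((j-1)+(m-1), j-1) = prod_{i=0..j-2}(m+i)/(j-1)!.\<close>
definition f_dp :: "nat \<Rightarrow> nat \<Rightarrow> complex \<Rightarrow> complex" where
  "f_dp d p m = (\<Sum>j\<in>{1..p}.
      ((\<Prod>i<j - 1. m + of_nat i) / of_nat (fact (j - 1))) * binom_poly (d - j) m)"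

end

theory Submission
  imports Defs "HOL-Computational_Algebra.Polynomial"
begin

text \<open>
  For \<open>j \<le> p\<close> the factor \<open>binom(d-j+m, d-j)\<close> contains \<open>(m+1)\<cdots>(m+d-p)\<close>, so
  \<open>f\<^sub>d\<^sub>,\<^sub>p(m) = (m+1)\<cdots>(m+d-p) \<cdot> g(m)\<close> with a real polynomial \<open>g\<close> of degree at most \<open>p-1\<close>.
  For \<open>0 \<le> k \<le> p-1\<close>, up to the factor \<open>1/(d-p-k)!\<close> the value \<open>g(-k)\<close> is the alternating sum
  \<open>\<Sum>\<^sub>t (-1)\<^sup>t C(k,t) (d-1-t-k)!/(d-1-t)!\<close>, a \<open>k\<close>-th finite difference equal to
  \<open>(-1)\<^sup>k k(k+1)\<cdots>(2k-1) (d-1-2k)!/(d-1)!\<close>; hence \<open>(-1)\<^sup>k g(-k) > 0\<close> as long as \<open>d \<ge> 2p-2\<close>.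
  By the intermediate value theorem \<open>g\<close> has a root in each interval \<open>(-i, -(i-1))\<close>,
  and the degree bound says these \<open>p-1\<close> roots are all of them.
\<close>


lemma alternating_binomial_sum_Suc:
  fixes \<psi> :: "nat \<Rightarrow> 'a::comm_ring_1"
  shows "(\<Sum>t\<le>Suc k. (-1)^t * of_nat (Suc k choose t) * \<psi> t) =
         (\<Sum>t\<le>k. (-1)^t * of_nat (k choose t) * \<psi> t)
       - (\<Sum>t\<le>k. (-1)^t * of_nat (k choose t) * \<psi> (Suc t))"
proof -
  have "(\<Sum>t\<le>Suc k. (-1)^t * of_nat (Suc k choose t) * \<psi> t) =
        \<psi> 0 + (\<Sum>t\<le>k. (-1)^Suc t * of_nat (Suc k choose Suc t) * \<psi> (Suc t))"
    by (subst sum.atMost_Suc_shift) simp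
  also have "\<dots> = \<psi> 0 + (\<Sum>t\<le>k. (-1)^Suc t * of_nat (k choose Suc t) * \<psi> (Suc t))
      - (\<Sum>t\<le>k. (-1)^t * of_nat (k choose t) * \<psi> (Suc t))"
    by (simp add: sum_subtractf[symmetric] sum.distrib[symmetric] algebra_simps)
  also have "\<psi> 0 + (\<Sum>t\<le>k. (-1)^Suc t * of_nat (k choose Suc t) * \<psi> (Suc t))
      = (\<Sum>t\<le>Suc k. (-1)^t * of_nat (k choose t) * \<psi> t)"
    by (subst sum.atMost_Suc_shift) simp
  also have "\<dots> = (\<Sum>t\<le>k. (-1)^t * of_nat (k choose t) * \<psi> t)"
    by (simp add: binomial_eq_0)
  finally show ?thesis .
qed

lemma alternating_binomial_sum_fact_quotient:
  assumes "a + k \<le> s"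
  shows "(\<Sum>t\<le>k. (-1)^t * real (k choose t) * (fact (s - t - a) / fact (s - t))) =
         (-1)^k * pochhammer (real a) k * fact (s - a - k) / fact s"
  using assms
proof (induction k arbitrary: s)
  case 0
  then show ?case by simp
next
  case (Suc k)
  obtain r where s: "s = Suc (a + k + r)"
    using Suc.prems by (metis add_Suc_right le_iff_add add.commute)
  have shift: "s - 1 - t - a = s - Suc t - a" "s - 1 - t = s - Suc t" for t
    by auto
  let ?c = "(-1)^k * pochhammer (real a) k"
  have "(\<Sum>t\<le>Suc k. (-1)^t * real (Suc k choose t) * (fact (s - t - a) / fact (s - t))) =
        ?c * fact (s - a - k) / fact s - ?c * fact (s - 1 - a - k) / fact (s - 1)"
    unfolding alternating_binomial_sum_Suc shift[symmetric]
    using Suc.IH[of s] Suc.IH[of "s - 1"] Suc.prems by simp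
  also have "\<dots> = ?c * ((real r + 1) * fact r) / ((real a + real k + real r + 1) * fact (a + k + r))
      - ?c * fact r / fact (a + k + r)"
    by (simp add: s algebra_simps)
  also have "\<dots> = - (?c * (real a + real k) * fact r) / ((real a + real k + real r + 1) * fact (a + k + r))"
    by (simp add: divide_simps) (simp add: algebra_simps)
  also have "\<dots> = (-1)^Suc k * pochhammer (real a) (Suc k) * fact (s - a - Suc k) / fact s"
    by (simp add: s pochhammer_rec' algebra_simps)
  finally show ?case .
qed

lemma prod_lessThan_minus_of_nat:
  assumes "t \<le> k"
  shows "(\<Prod>i<t. - real k + real i) = (-1)^t * fact k / fact (k - t)"
  using assms
proof (induction t)
  case 0
  then show ?case by simp
next
  case (Suc t)
  have "fact (k - t) = real (k - t) * fact (k - Suc t)"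
    using Suc.prems by (metis Suc_diff_Suc fact_Suc less_eq_Suc_le of_nat_fact of_nat_mult)
  with Suc show ?case
    by (simp add: of_nat_diff field_simps)
qed

lemma prod_atLeastAtMost_minus_of_nat:
  assumes "k \<le> n" and "n \<le> m"
  shows "(\<Prod>i\<in>{n+1..m}. - real k + real i) = fact (m - k) / fact (n - k)"
  using assms(2)
proof (induction m rule: dec_induct)
  case base
  then show ?case by simp
next
  case (step m)
  then have "{n+1..Suc m} = insert (Suc m) {n+1..m}"
    by auto
  with step assms(1) show ?case
    by (simp add: Suc_diff_le of_nat_diff)
qed

definition g_dp :: "nat \<Rightarrow> nat \<Rightarrow> 'a::real_field \<Rightarrow> 'a" where
  "g_dp d p x = (\<Sum>j\<in>{1..p}. ((\<Prod>i<j - 1. x + of_nat i) / of_nat (fact (j - 1))) *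
      ((\<Prod>i\<in>{d-p+1..d-j}. x + of_nat i) / of_nat (fact (d - j))))"

lemma f_dp_eq_prod_mult_g_dp:
  assumes "p < d"
  shows "f_dp d p z = (\<Prod>i\<in>{1..d-p}. z + of_nat i) * g_dp d p z"
  unfolding f_dp_def binom_poly_def g_dp_def sum_distrib_left
proof (rule sum.cong)
  fix j assume j: "j \<in> {1..p}"
  then have split: "d - j = (d - p) + (p - j)"
    using assms by auto
  have "(\<Prod>i\<in>{1..d-j}. z + of_nat i) =
        (\<Prod>i\<in>{1..d-p}. z + of_nat i) * (\<Prod>i\<in>{d-p+1..d-j}. z + of_nat i)"
    unfolding split by (rule prod.ub_add_nat) simp
  then show "(\<Prod>i<j - 1. z + of_nat i) / of_nat (fact (j - 1)) *
          ((\<Prod>i\<in>{1..d - j}. z + of_nat i) / of_nat (fact (d - j))) =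
         (\<Prod>i\<in>{1..d-p}. z + of_nat i) *
         ((\<Prod>i<j - 1. z + of_nat i) / of_nat (fact (j - 1)) *
          ((\<Prod>i\<in>{d - p + 1..d - j}. z + of_nat i) / of_nat (fact (d - j))))"
    by simp
qed simp

lemma g_dp_neg_of_nat:
  assumes "k < p" and "k \<le> d - p" and "2 * k + 1 \<le> d"
  shows "g_dp d p (- real k) =
         (-1)^k * pochhammer (real k) k * fact (d - 1 - k - k) / fact (d - 1) / fact (d - p - k)"
proof -
  define T where "T j = ((\<Prod>i<j - 1. - real k + of_nat i) / of_nat (fact (j - 1))) *
      ((\<Prod>i\<in>{d-p+1..d-j}. - real k + of_nat i) / of_nat (fact (d - j)))" for j
  have "g_dp d p (- real k) = (\<Sum>t<p. T (Suc t))"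
    by (simp add: g_dp_def T_def sum.atLeast1_atMost_eq)
  also have "\<dots> = (\<Sum>t\<le>k. T (Suc t))"
  proof (rule sum.mono_neutral_right)
    show "\<forall>t\<in>{..<p} - {..k}. T (Suc t) = 0"
      unfolding T_def by (auto intro!: prod_zero bexI[of _ k])
  qed (use assms in auto)
  also have "\<dots> = (\<Sum>t\<le>k. (-1)^t * real (k choose t) * (fact (d - 1 - t - k) / fact (d - 1 - t)))
                    / fact (d - p - k)"
    unfolding sum_divide_distrib
  proof (rule sum.cong)
    fix t assume "t \<in> {..k}"
    then have t: "t \<le> k" by simp
    have "T (Suc t) = ((-1)^t * fact k / fact (k - t)) / fact t
                      * (fact (d - 1 - t - k) / fact (d - p - k) / fact (d - 1 - t))"
      using assms t prod_lessThan_minus_of_nat[OF t]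
        prod_atLeastAtMost_minus_of_nat[of k "d - p" "d - Suc t"]
      by (simp add: T_def)
    also have "\<dots> = (-1)^t * (fact k / (fact t * fact (k - t)))
                      * (fact (d - 1 - t - k) / fact (d - 1 - t)) / fact (d - p - k)"
      by (simp add: field_simps)
    finally show "T (Suc t) = (-1)^t * real (k choose t) * (fact (d - 1 - t - k) / fact (d - 1 - t))
                              / fact (d - p - k)"
      by (simp only: binomial_fact[OF t])
  qed simp
  also have "\<dots> = (-1)^k * pochhammer (real k) k * fact (d - 1 - k - k) / fact (d - 1) / fact (d - p - k)"
    using alternating_binomial_sum_fact_quotient[of k k "d - 1"] assms by simp
  finally show ?thesis .
qed

text \<open>At the one point outside the range of \<open>g_dp_neg_of_nat\<close> only the term \<open>j = p\<close> survives.\<close>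

lemma g_dp_neg_of_nat_boundary:
  assumes "d = 2 * p - 2" and "2 \<le> p"
  shows "g_dp d p (- real (p - 1)) = (-1)^(p - 1) / fact (d - p)"
proof -
  define T where "T j = ((\<Prod>i<j - 1. - real (p - 1) + of_nat i) / of_nat (fact (j - 1))) *
      ((\<Prod>i\<in>{d-p+1..d-j}. - real (p - 1) + of_nat i) / of_nat (fact (d - j)))" for j
  have "g_dp d p (- real (p - 1)) = sum T {1..p}"
    by (simp add: g_dp_def T_def)
  also have "{1..p} = insert p {1..p-1}"
    using assms by auto
  also have "sum T (insert p {1..p-1}) = T p + sum T {1..p-1}"
    using assms by (subst sum.insert) auto
  also have "sum T {1..p-1} = 0"
    using assms by (intro sum.neutral) (auto simp: T_def intro!: prod_zero bexI[of _ "p - 1"])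
  also have "T p = (-1)^(p - 1) / fact (d - p)"
    using prod_lessThan_minus_of_nat[of "p - 1" "p - 1"] by (simp add: T_def)
  finally show ?thesis by simp
qed

lemma g_dp_neg_of_nat_sign:
  assumes "2 \<le> p" and "p < d" and "2 * p \<le> d + 2" and "k < p"
  shows "(-1)^k * g_dp d p (- real k) > (0::real)"
proof (cases "d = 2 * p - 2 \<and> k = p - 1")
  case True
  then have "(-1)^k * g_dp d p (- real k) = 1 / fact (d - p)"
    using g_dp_neg_of_nat_boundary[of d p] assms by (simp add: power_mult_distrib[symmetric])
  then show ?thesis by simp
next
  case False
  then have "k \<le> d - p" and "2 * k + 1 \<le> d"
    using assms by auto
  then have "(-1)^k * g_dp d p (- real k) = ((-1)^k * (-1)^k) * pochhammer (real k) k
             * fact (d - 1 - k - k) / fact (d - 1) / fact (d - p - k)"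
    using g_dp_neg_of_nat[of k p d] assms by simp
  also have "(-1)^k * (-1)^k = (1::real)"
    by (simp add: power_mult_distrib[symmetric])
  finally have "(-1)^k * g_dp d p (- real k) = pochhammer (real k) k
                 * fact (d - 1 - k - k) / fact (d - 1) / fact (d - p - k)"
    by simp
  moreover have "pochhammer (real k) k > 0"
    by (cases "k = 0") (auto intro: pochhammer_pos)
  ultimately show ?thesis
    by simp
qed

definition g_dp_poly :: "nat \<Rightarrow> nat \<Rightarrow> 'a::real_field poly" where
  "g_dp_poly d p = (\<Sum>j\<in>{1..p}. smult (inverse (of_nat (fact (j - 1)) * of_nat (fact (d - j))))
     ((\<Prod>i<j - 1. [:of_nat i, 1:]) * (\<Prod>i\<in>{d-p+1..d-j}. [:of_nat i, 1:])))"

lemma poly_g_dp_poly: "poly (g_dp_poly d p) x = g_dp d p x"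
  unfolding g_dp_poly_def g_dp_def poly_sum
  by (rule sum.cong) (simp_all add: poly_prod add.commute field_simps)

lemma degree_g_dp_poly:
  assumes "p < d"
  shows "degree (g_dp_poly d p :: 'a::real_field poly) \<le> p - 1"
  unfolding g_dp_poly_def
proof (rule degree_sum_le)
  fix j assume j: "j \<in> {1..p}"
  let ?A = "(\<Prod>i<j - 1. [:of_nat i, 1:]) :: 'a poly"
  let ?B = "(\<Prod>i\<in>{d-p+1..d-j}. [:of_nat i, 1:]) :: 'a poly"
  have "degree ?A \<le> j - 1"
    using degree_prod_sum_le[of "{..<j-1}" "\<lambda>i. [:of_nat i, 1::'a:]"] by simp
  moreover have "degree ?B \<le> p - j"
    using degree_prod_sum_le[of "{d-p+1..d-j}" "\<lambda>i. [:of_nat i, 1::'a:]"] j assms by simp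
  ultimately have "degree (?A * ?B) \<le> p - 1"
    using degree_mult_le[of ?A ?B] j by (simp only: atLeastAtMost_iff) linarith
  then show "degree (smult (inverse (of_nat (fact (j - 1)) * of_nat (fact (d - j)))) (?A * ?B)) \<le> p - 1"
    using degree_smult_le order_trans by blast
qed simp

lemma g_dp_of_real: "g_dp d p (complex_of_real x) = complex_of_real (g_dp d p x)"
  by (simp add: g_dp_def)

lemma continuous_on_g_dp: "continuous_on S (g_dp d p :: real \<Rightarrow> real)"
proof -
  have "continuous_on S (\<lambda>x. poly (g_dp_poly d p) (x :: real))"
    by (intro continuous_intros)
  then show ?thesis
    by (simp add: poly_g_dp_poly)
qed

lemma sign_change_imp_root_between:
  fixes f :: "real \<Rightarrow> real"
  assumes "continuous_on {a..b} f" and "a \<le> b" and "f a * f b < 0"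
  shows "\<exists>x. a < x \<and> x < b \<and> f x = 0"
proof -
  have "\<exists>x. a \<le> x \<and> x \<le> b \<and> f x = 0"
  proof (cases "f a < 0")
    case True
    then show ?thesis
      using IVT'[of f a 0 b] assms by (auto simp: mult_less_0_iff)
  next
    case False
    then show ?thesis
      using IVT2'[of f b 0 a] assms by (auto simp: mult_less_0_iff)
  qed
  moreover have "f a \<noteq> 0" "f b \<noteq> 0"
    using assms(3) by auto
  ultimately show ?thesis
    by (metis order.not_eq_order_implies_strict)
qed

lemma g_dp_root_between:
  assumes "2 \<le> p" and "p < d" and "2 * p \<le> d + 2" and i: "i \<in> {1..p - 1}"
  shows "\<exists>x. - real i < x \<and> x < - (real i - 1) \<and> g_dp d p x = 0"
proof -
  have "(-1)^i * g_dp d p (- real i) > (0::real)"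
    and "(-1)^(i - 1) * g_dp d p (- real (i - 1)) > (0::real)"
    using g_dp_neg_of_nat_sign[OF assms(1-3), of i] g_dp_neg_of_nat_sign[OF assms(1-3), of "i - 1"] i
    by auto
  moreover obtain j where "i = Suc j"
    using i by (cases i) auto
  ultimately have "g_dp d p (- real i) * g_dp d p (- real (i - 1)) < (0::real)"
    by (cases "even j") (auto simp: mult_less_0_iff)
  moreover have "- real (i - 1) = - (real i - 1)"
    using i by auto
  ultimately show ?thesis
    using sign_change_imp_root_between[OF continuous_on_g_dp] by auto
qed

lemma g_dp_roots_eq_image:
  assumes "2 \<le> p" and "p < d" and "2 * p \<le> d + 2"
    and \<alpha>: "\<forall>i\<in>{1..p - 1}. - real i < \<alpha> i \<and> \<alpha> i < - (real i - 1) \<and> g_dp d p (\<alpha> i) = 0"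
  shows "{z :: complex. g_dp d p z = 0} = (\<lambda>i. complex_of_real (\<alpha> i)) ` {1..p - 1}"
    (is "?R = ?A")
proof -
  have "inj_on (\<lambda>i. complex_of_real (\<alpha> i)) {1..p - 1}"
  proof (rule inj_onI)
    fix i j assume i: "i \<in> {1..p - 1}" and j: "j \<in> {1..p - 1}"
      and "complex_of_real (\<alpha> i) = complex_of_real (\<alpha> j)"
    then have "\<alpha> i = \<alpha> j"
      by simp
    with \<alpha>[rule_format, OF i] \<alpha>[rule_format, OF j] have "real i < real j + 1" "real j < real i + 1"
      by linarith+
    then show "i = j"
      by linarith
  qed
  then have card_A: "card ?A = p - 1"
    by (simp add: card_image)
  have A_R: "?A \<subseteq> ?R"
    using \<alpha> by (auto simp: g_dp_of_real)
  have "g_dp d p (0 :: real) \<noteq> 0"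
    using g_dp_neg_of_nat_sign[OF assms(1-3), of 0] assms(1) by simp
  then have nz: "g_dp_poly d p \<noteq> (0 :: complex poly)"
    by (metis g_dp_of_real of_real_0 of_real_eq_0_iff poly_0 poly_g_dp_poly)
  have R: "?R = {z. poly (g_dp_poly d p) z = 0}"
    by (simp add: poly_g_dp_poly)
  have "finite ?R"
    unfolding R by (rule poly_roots_finite[OF nz])
  moreover have "card ?R \<le> p - 1"
    unfolding R using card_poly_roots_bound[OF nz] degree_g_dp_poly[OF assms(2), where 'a = complex]
    by linarith
  ultimately show ?thesis
    using card_seteq[OF _ A_R] card_A by simp
qed

lemma roots_prod_shifted:
  "{z :: 'a::idom. (\<Prod>i\<in>{1..n}. z + of_nat i) = 0} = {- of_nat k | k. 1 \<le> k \<and> k \<le> n}"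
  by (auto simp: prod_zero_iff add_eq_0_iff) (metis minus_minus)

theorem theorem2p6:
  fixes d p :: nat
  assumes "2 \<le> p" and "p < d" and "int d - 2 * int p + 2 \<ge> 0"
  shows "\<exists>\<alpha> :: nat \<Rightarrow> real.
           {z :: complex. f_dp d p z = 0} =
             {- of_nat k | k. 1 \<le> k \<and> k \<le> d - p} \<union> {complex_of_real (\<alpha> i) | i. 1 \<le> i \<and> i \<le> p - 1}
         \<and> (\<forall>i\<in>{1..p - 1}. - real i < \<alpha> i \<and> \<alpha> i < - (real i - 1))"
proof -
  have dp: "2 * p \<le> d + 2"
    using assms(3) by linarith
  have "\<forall>i\<in>{1..p - 1}. \<exists>x. - real i < x \<and> x < - (real i - 1) \<and> g_dp d p x = 0"
    using g_dp_root_between[OF assms(1,2) dp] by blast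
  then obtain \<alpha> where \<alpha>: "\<forall>i\<in>{1..p - 1}. - real i < \<alpha> i \<and> \<alpha> i < - (real i - 1) \<and> g_dp d p (\<alpha> i) = 0"
    by metis
  have "{z :: complex. f_dp d p z = 0} =
        {z. (\<Prod>i\<in>{1..d-p}. z + of_nat i) = 0} \<union> {z. g_dp d p z = 0}"
    by (auto simp: f_dp_eq_prod_mult_g_dp[OF assms(2)])
  also have "\<dots> = {- of_nat k | k. 1 \<le> k \<and> k \<le> d - p} \<union> {complex_of_real (\<alpha> i) | i. 1 \<le> i \<and> i \<le> p - 1}"
    unfolding roots_prod_shifted g_dp_roots_eq_image[OF assms(1,2) dp \<alpha>] by (auto simp: image_def)
  finally have "{z :: complex. f_dp d p z = 0} =
      {- of_nat k | k. 1 \<le> k \<and> k \<le> d - p} \<union> {complex_of_real (\<alpha> i) | i. 1 \<le> i \<and> i \<le> p - 1}" .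
  then show ?thesis
    by (intro exI[of _ \<alpha>]) (use \<alpha> in simp)
qed

end
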